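(* Let $\mathcal{A}^*$ be a graded-commutative differential graded algebra over a field of characteristic zero, let $\mathcal{N}^*$ be a formal DG-module over $\mathcal{A}^*$, and let $\alpha\in H^1(\mathcal{A}^* )$. Then the deformation spectral sequence $\mathcal{F}^*_r(\mathcal{N}^*,\alpha)$ degenerates at its second term.
   Context: A DG-module $\mathcal{N}^*$ over $\mathcal{A}^*$ is a graded $\mathcal{A}^*$-module with a differential satisfying the Leibniz rule. It is called formal if it is a direct summand of a formal DGA $\mathcal{B}^*$ over $\mathcal{A}^*$ (a DGA which is also a DG-module over $\mathcal{A}^*$, compatibly), that is $\mathcal{B}^*=\mathcal{N}^*\oplus\mathcal{K}^*$ with $\mathcal{N}^*,\mathcal{K}^*$ DG-submodules of $\mathcal{B}^*$; a DGA is formal if it has the same minimal model as its cohomology algebra. Deformation spectral sequence: for $\alpha=[\xi]$, $\xi\in\mathcal{A}^1$ a cocycle, endow $\mathcal{N}^*[[t]]$ (formal power series over $\mathcal{N}^*$) with $D_tx=dx+t\xi x$; the sequence $0\to\mathcal{N}^*[[t]]\xrightarrow{t}\mathcal{N}^*[[t]]\xrightarrow{\pi}\mathcal{N}^*\to0$ ($\pi$: $t\mapsto0$) gives an exact couple with $D=H^*(\mathcal{N}^*[[t]],D_t)$, $E=H^*(\mathcal{N}^* )$; $\mathcal{F}^*_r(\mathcal{N}^*,\alpha)$ is its spectral sequence. Degenerating at the second term means $d_r=0$ for all $r\ge2$. *)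

theory Defs
  imports Main "HOL.Modules"
begin

text \<open>A graded object is a family of subspaces X p (p an integer degree) of an
ambient vector space (a type with a scalar multiplication).  Different pieces meet only in 0.  All axioms are imposed only on
homogeneous elements.\<close>

record ('k, 'a) dga_rec =
  gcar :: "int \<Rightarrow> 'a set"
  scl  :: "'k \<Rightarrow> 'a \<Rightarrow> 'a"
  mul  :: "'a \<Rightarrow> 'a \<Rightarrow> 'a"
  one  :: "'a"
  dif  :: "'a \<Rightarrow> 'a"

definition ksign :: "int \<Rightarrow> 'k::field" where
  "ksign n = (if even n then 1 else -1)"

definition graded_space :: "('k::field \<Rightarrow> 'a::ab_group_add \<Rightarrow> 'a) \<Rightarrow> (int \<Rightarrow> 'a set) \<Rightarrow> bool" where
  "graded_space s X \<longleftrightarrow>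
     module s \<and> (\<forall>p. module.subspace s (X p)) \<and> (\<forall>p<0. X p = {0}) \<and>
     (\<forall>p q. p \<noteq> q \<longrightarrow> X p \<inter> X q \<subseteq> {0})"

definition exact_in :: "('k, 'a) dga_rec \<Rightarrow> int \<Rightarrow> 'a \<Rightarrow> bool" where
  "exact_in A p z \<longleftrightarrow> (\<exists>u \<in> gcar A (p - 1). z = dif A u)"

definition is_dga :: "('k::field, 'a::ab_group_add) dga_rec \<Rightarrow> bool" where
  "is_dga A \<longleftrightarrow>
     graded_space (scl A) (gcar A) \<and>
     one A \<in> gcar A 0 \<and>
     (\<forall>p q. \<forall>x \<in> gcar A p. \<forall>y \<in> gcar A q. mul A x y \<in> gcar A (p + q)) \<and>
     (\<forall>p q. \<forall>x \<in> gcar A p. \<forall>x' \<in> gcar A p. \<forall>y \<in> gcar A q.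
        mul A (x + x') y = mul A x y + mul A x' y \<and> mul A y (x + x') = mul A y x + mul A y x') \<and>
     (\<forall>p q c. \<forall>x \<in> gcar A p. \<forall>y \<in> gcar A q.
        mul A (scl A c x) y = scl A c (mul A x y) \<and> mul A x (scl A c y) = scl A c (mul A x y)) \<and>
     (\<forall>p q r. \<forall>x \<in> gcar A p. \<forall>y \<in> gcar A q. \<forall>z \<in> gcar A r.
        mul A (mul A x y) z = mul A x (mul A y z)) \<and>
     (\<forall>p. \<forall>x \<in> gcar A p. mul A (one A) x = x \<and> mul A x (one A) = x) \<and>
     (\<forall>p. \<forall>x \<in> gcar A p. dif A x \<in> gcar A (p + 1)) \<and>
     (\<forall>p c. \<forall>x \<in> gcar A p. \<forall>y \<in> gcar A p.
        dif A (x + y) = dif A x + dif A y \<and> dif A (scl A c x) = scl A c (dif A x)) \<and>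
     (\<forall>p. \<forall>x \<in> gcar A p. dif A (dif A x) = 0) \<and>
     (\<forall>p q. \<forall>x \<in> gcar A p. \<forall>y \<in> gcar A q.
        dif A (mul A x y) = mul A (dif A x) y + scl A (ksign p) (mul A x (dif A y)))"

definition is_cdga :: "('k::field, 'a::ab_group_add) dga_rec \<Rightarrow> bool" where
  "is_cdga A \<longleftrightarrow> is_dga A \<and>
     (\<forall>p q. \<forall>x \<in> gcar A p. \<forall>y \<in> gcar A q. mul A x y = scl A (ksign (p * q)) (mul A y x))"

definition dg_module_over ::
  "('k::field, 'a::ab_group_add) dga_rec \<Rightarrow> ('k \<Rightarrow> 'b::ab_group_add \<Rightarrow> 'b) \<Rightarrow> ('b \<Rightarrow> 'b)
     \<Rightarrow> (int \<Rightarrow> 'b set) \<Rightarrow> ('a \<Rightarrow> 'b \<Rightarrow> 'b) \<Rightarrow> bool" where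
  "dg_module_over A s d X act \<longleftrightarrow>
     graded_space s X \<and>
     (\<forall>p. \<forall>x \<in> X p. d x \<in> X (p + 1)) \<and>
     (\<forall>p c. \<forall>x \<in> X p. \<forall>y \<in> X p. d (x + y) = d x + d y \<and> d (s c x) = s c (d x)) \<and>
     (\<forall>p. \<forall>x \<in> X p. d (d x) = 0) \<and>
     (\<forall>p q. \<forall>a \<in> gcar A p. \<forall>x \<in> X q. act a x \<in> X (p + q)) \<and>
     (\<forall>p q c. \<forall>a \<in> gcar A p. \<forall>a' \<in> gcar A p. \<forall>x \<in> X q. \<forall>x' \<in> X q.
        act (a + a') x = act a x + act a' x \<and> act a (x + x') = act a x + act a x' \<and>
        act (scl A c a) x = s c (act a x) \<and> act a (s c x) = s c (act a x)) \<and>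
     (\<forall>p p' q. \<forall>a \<in> gcar A p. \<forall>a' \<in> gcar A p'. \<forall>x \<in> X q.
        act (mul A a a') x = act a (act a' x)) \<and>
     (\<forall>q. \<forall>x \<in> X q. act (one A) x = x) \<and>
     (\<forall>p q. \<forall>a \<in> gcar A p. \<forall>x \<in> X q.
        d (act a x) = act (dif A a) x + s (ksign p) (act a (d x)))"

definition dga_over ::
  "('k::field, 'a::ab_group_add) dga_rec \<Rightarrow> ('k, 'b::ab_group_add) dga_rec \<Rightarrow> ('a \<Rightarrow> 'b \<Rightarrow> 'b) \<Rightarrow> bool" where
  "dga_over A B act \<longleftrightarrow> is_dga B \<and> dg_module_over A (scl B) (dif B) (gcar B) act \<and>
     (\<forall>p q r. \<forall>a \<in> gcar A p. \<forall>x \<in> gcar B q. \<forall>y \<in> gcar B r.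
        act a (mul B x y) = mul B (act a x) y)"

definition dg_submodule ::
  "('k::field, 'a::ab_group_add) dga_rec \<Rightarrow> ('k, 'b::ab_group_add) dga_rec \<Rightarrow> ('a \<Rightarrow> 'b \<Rightarrow> 'b)
     \<Rightarrow> (int \<Rightarrow> 'b set) \<Rightarrow> bool" where
  "dg_submodule A B act N \<longleftrightarrow>
     (\<forall>p. N p \<subseteq> gcar B p \<and> module.subspace (scl B) (N p)) \<and>
     (\<forall>p. \<forall>x \<in> N p. dif B x \<in> N (p + 1)) \<and>
     (\<forall>p q. \<forall>a \<in> gcar A p. \<forall>x \<in> N q. act a x \<in> N (p + q))"

definition hdeg :: "('k, 'a::zero) dga_rec \<Rightarrow> 'a \<Rightarrow> int" where
  "hdeg M v = (THE p. v \<in> gcar M p)"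

text \<open>Admissible monomials in a well-ordered homogeneous basis S of V:
non-decreasing words, odd generators not repeated.\<close>
definition adm_word :: "('k, 'a::zero) dga_rec \<Rightarrow> 'a set \<Rightarrow> ('a \<Rightarrow> 'a \<Rightarrow> bool) \<Rightarrow> 'a list \<Rightarrow> bool" where
  "adm_word M S lt ws \<longleftrightarrow> set ws \<subseteq> S \<and>
     sorted_wrt (\<lambda>a b. lt a b \<or> (a = b \<and> even (hdeg M a))) ws"

definition mono_val :: "('k, 'a) dga_rec \<Rightarrow> 'a list \<Rightarrow> 'a" where
  "mono_val M ws = foldr (mul M) ws (one M)"

text \<open>M is a minimal Sullivan algebra (Lambda V, d): free graded-commutative on
V = span S with S a well-ordered homogeneous basis in positive degrees, such that
d v lies in Lambda(V_{<v}) (Sullivan condition) and in Lambda^{\<ge>2} V (minimality).\<close>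
definition minimal_sullivan :: "('k::field, 'a::ab_group_add) dga_rec \<Rightarrow> bool" where
  "minimal_sullivan M \<longleftrightarrow> is_cdga M \<and>
     (\<exists>S lt.
        (\<forall>v \<in> S. v \<noteq> 0 \<and> (\<exists>p\<ge>1. v \<in> gcar M p)) \<and>
        (\<forall>a \<in> S. \<not> lt a a) \<and>
        (\<forall>a \<in> S. \<forall>b \<in> S. \<forall>c \<in> S. lt a b \<longrightarrow> lt b c \<longrightarrow> lt a c) \<and>
        (\<forall>a \<in> S. \<forall>b \<in> S. a = b \<or> lt a b \<or> lt b a) \<and>
        wf {(a, b). a \<in> S \<and> b \<in> S \<and> lt a b} \<and>
        inj_on (mono_val M) {ws. adm_word M S lt ws} \<and>
        \<not> module.dependent (scl M) (mono_val M ` {ws. adm_word M S lt ws}) \<and>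
        (\<forall>p. gcar M p \<subseteq> module.span (scl M) (mono_val M ` {ws. adm_word M S lt ws})) \<and>
        (\<forall>v \<in> S. dif M v \<in> module.span (scl M)
            (mono_val M ` {ws. adm_word M S lt ws \<and> (\<forall>u \<in> set ws. lt u v)})) \<and>
        (\<forall>v \<in> S. dif M v \<in> module.span (scl M)
            (mono_val M ` {ws. adm_word M S lt ws \<and> 2 \<le> length ws})))"

definition quasi_iso :: "('k::field, 'm::ab_group_add) dga_rec \<Rightarrow> ('k, 'b::ab_group_add) dga_rec \<Rightarrow> ('m \<Rightarrow> 'b) \<Rightarrow> bool" where
  "quasi_iso M B f \<longleftrightarrow>
     (\<forall>p. \<forall>x \<in> gcar M p. f x \<in> gcar B p) \<and>
     (\<forall>p c. \<forall>x \<in> gcar M p. \<forall>y \<in> gcar M p. f (x + y) = f x + f y \<and> f (scl M c x) = scl B c (f x)) \<and>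
     (\<forall>p q. \<forall>x \<in> gcar M p. \<forall>y \<in> gcar M q. f (mul M x y) = mul B (f x) (f y)) \<and>
     f (one M) = one B \<and>
     (\<forall>p. \<forall>x \<in> gcar M p. f (dif M x) = dif B (f x)) \<and>
     (\<forall>p. \<forall>z \<in> gcar M p. dif M z = 0 \<longrightarrow> exact_in B p (f z) \<longrightarrow> exact_in M p z) \<and>
     (\<forall>p. \<forall>w \<in> gcar B p. dif B w = 0 \<longrightarrow>
        (\<exists>z \<in> gcar M p. dif M z = 0 \<and> exact_in B p (f z - w)))"

text \<open>A class in H^p(B) is represented by a
cocycle of B of degree p; g assigns to each homogeneous element of M a representative of its
image class, so all identities hold modulo exact elements.\<close>
definition quasi_iso_to_coh :: "('k::field, 'm::ab_group_add) dga_rec \<Rightarrow> ('k, 'b::ab_group_add) dga_rec \<Rightarrow> ('m \<Rightarrow> 'b) \<Rightarrow> bool" where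
  "quasi_iso_to_coh M B g \<longleftrightarrow>
     (\<forall>p. \<forall>x \<in> gcar M p. g x \<in> gcar B p \<and> dif B (g x) = 0) \<and>
     (\<forall>p c. \<forall>x \<in> gcar M p. \<forall>y \<in> gcar M p.
        exact_in B p (g (x + y) - (g x + g y)) \<and> exact_in B p (g (scl M c x) - scl B c (g x))) \<and>
     (\<forall>p q. \<forall>x \<in> gcar M p. \<forall>y \<in> gcar M q. exact_in B (p + q) (g (mul M x y) - mul B (g x) (g y))) \<and>
     exact_in B 0 (g (one M) - one B) \<and>
     (\<forall>p. \<forall>x \<in> gcar M p. exact_in B (p + 1) (g (dif M x))) \<and>
     (\<forall>p. \<forall>z \<in> gcar M p. dif M z = 0 \<longrightarrow> exact_in B p (g z) \<longrightarrow> exact_in M p z) \<and>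
     (\<forall>p. \<forall>w \<in> gcar B p. dif B w = 0 \<longrightarrow>
        (\<exists>z \<in> gcar M p. dif M z = 0 \<and> exact_in B p (g z - w)))"

text \<open>B is formal: B and its cohomology algebra have the same minimal model, i.e. there is a
minimal Sullivan algebra M (carried by the type 'm) with quasi-isomorphisms M \<rightarrow> B and
M \<rightarrow> H(B).\<close>
definition formal_dga :: "'m::ab_group_add itself \<Rightarrow> ('k::field, 'b::ab_group_add) dga_rec \<Rightarrow> bool" where
  "formal_dga _ B \<longleftrightarrow> (\<exists>(M :: ('k, 'm) dga_rec) f g.
      minimal_sullivan M \<and> quasi_iso M B f \<and> quasi_iso_to_coh M B g)"

text \<open>N[[t]] in degree p: formal power series (coefficient sequences) with coefficients in N^p.\<close>
definition pser :: "(int \<Rightarrow> 'b set) \<Rightarrow> int \<Rightarrow> (nat \<Rightarrow> 'b) set" where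
  "pser N p = {s. \<forall>n. s n \<in> N p}"

text \<open>D_t s = d s + t \<xi> s.\<close>
definition Dt :: "('b::ab_group_add \<Rightarrow> 'b) \<Rightarrow> ('a \<Rightarrow> 'b \<Rightarrow> 'b) \<Rightarrow> 'a \<Rightarrow> (nat \<Rightarrow> 'b) \<Rightarrow> (nat \<Rightarrow> 'b)" where
  "Dt d act xi s = (\<lambda>n. d (s n) + (if n = 0 then 0 else act xi (s (n - 1))))"

definition tpow :: "nat \<Rightarrow> (nat \<Rightarrow> 'b::zero) \<Rightarrow> (nat \<Rightarrow> 'b)" where
  "tpow m s = (\<lambda>n. if n < m then 0 else s (n - m))"

definition pconst :: "'b::zero \<Rightarrow> (nat \<Rightarrow> 'b)" where
  "pconst x = (\<lambda>n. if n = 0 then x else 0)"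

text \<open>Exact couple: D = H(N[[t]], D_t), E = H(N), i = t, j = \<pi>_* and k the connecting map,
k[x] = [\<xi> x].  The r-th differential d_r is defined on
E_r = k^{-1}(im i^{r-1}) / j(ker i^{r-1}) by d_r[x] = j(y) where i^{r-1}(y) = k[x].
The following says d_r = 0 for all r \<ge> 2, written on representatives:
for a cocycle x of N^p and a D_t-cocycle y of N[[t]]^{p+1} with i^{r-1}[y] = k[x],
the class j[y] = [y_0] lies in j(ker i^{r-1}).\<close>
definition defo_ss_degenerates_at_2 ::
  "('b::ab_group_add \<Rightarrow> 'b) \<Rightarrow> ('a \<Rightarrow> 'b \<Rightarrow> 'b) \<Rightarrow> (int \<Rightarrow> 'b set) \<Rightarrow> 'a \<Rightarrow> bool" where
  "defo_ss_degenerates_at_2 d act N xi \<longleftrightarrow>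
     (\<forall>r::nat. r \<ge> 2 \<longrightarrow> (\<forall>p. \<forall>x \<in> N p. \<forall>y \<in> pser N (p + 1).
        d x = 0 \<longrightarrow> Dt d act xi y = (\<lambda>_. 0) \<longrightarrow>
        (\<exists>u \<in> pser N p. tpow (r - 1) y - pconst (act xi x) = Dt d act xi u) \<longrightarrow>
        (\<exists>w \<in> pser N (p + 1). Dt d act xi w = (\<lambda>_. 0) \<and>
           (\<exists>u \<in> pser N p. tpow (r - 1) w = Dt d act xi u) \<and>
           (\<exists>v \<in> N p. y 0 - w 0 = d v))))"

end

theory Submission
  imports Defs "HOL-Library.Function_Algebras"
begin

text \<open>
  Since t^(r-1)[y] = k[x] = [\<xi>x], it suffices to show that \<xi>x is D_t-exact whenever it is
  exact in N, and for this that the class of x lifts to a D_t-cocycle s_0 + s_1t + s_2t^2 + ...: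
  then \<xi>s_0 is, up to sign, D_t of the shifted series.  The action of \<xi> on B is multiplication
  by the cocycle \<eta> = \<xi>\<cdot>1, so the lift can be built in B and projected to N along K.  In B it
  is built in a minimal model M: the quasi-isomorphism from M to (H(B), 0) allows each partial
  lift to be corrected by a cocycle so that its product with a representative e of [\<eta>] stays
  exact, which yields the next term (the obstructions are Massey products, and they vanish by
  formality).  Transported to B, the lift is a cocycle for \<eta> + db instead of \<eta>;
  multiplication by exp(tb) repairs this.
\<close>

section \<open>Graded algebras\<close>

lemma ksign_0 [simp]: "ksign 0 = 1"
  and ksign_1 [simp]: "ksign 1 = -1"
  and ksign_mult_self [simp]: "ksign p * ksign p = 1"
  by (simp_all add: ksign_def)

locale dga =
  fixes A :: "('k::field, 'a::ab_group_add) dga_rec"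
  assumes graded: "graded_space (scl A) (gcar A)"
    and one_in [simp, intro]: "one A \<in> gcar A 0"
    and mul_in [intro]: "x \<in> gcar A p \<Longrightarrow> y \<in> gcar A q \<Longrightarrow> mul A x y \<in> gcar A (p + q)"
    and mul_add_left: "x \<in> gcar A p \<Longrightarrow> x' \<in> gcar A p \<Longrightarrow> y \<in> gcar A q \<Longrightarrow>
      mul A (x + x') y = mul A x y + mul A x' y"
    and mul_add_right: "x \<in> gcar A p \<Longrightarrow> x' \<in> gcar A p \<Longrightarrow> y \<in> gcar A q \<Longrightarrow>
      mul A y (x + x') = mul A y x + mul A y x'"
    and mul_scale_left: "x \<in> gcar A p \<Longrightarrow> y \<in> gcar A q \<Longrightarrow> mul A (scl A c x) y = scl A c (mul A x y)"
    and mul_scale_right: "x \<in> gcar A p \<Longrightarrow> y \<in> gcar A q \<Longrightarrow> mul A x (scl A c y) = scl A c (mul A x y)"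
    and mul_assoc: "x \<in> gcar A p \<Longrightarrow> y \<in> gcar A q \<Longrightarrow> z \<in> gcar A r \<Longrightarrow>
      mul A (mul A x y) z = mul A x (mul A y z)"
    and mul_one_left: "x \<in> gcar A p \<Longrightarrow> mul A (one A) x = x"
    and mul_one_right: "x \<in> gcar A p \<Longrightarrow> mul A x (one A) = x"
    and dif_in [intro]: "x \<in> gcar A p \<Longrightarrow> dif A x \<in> gcar A (p + 1)"
    and dif_add: "x \<in> gcar A p \<Longrightarrow> y \<in> gcar A p \<Longrightarrow> dif A (x + y) = dif A x + dif A y"
    and dif_scale: "x \<in> gcar A p \<Longrightarrow> dif A (scl A c x) = scl A c (dif A x)"
    and dif_dif: "x \<in> gcar A p \<Longrightarrow> dif A (dif A x) = 0"
    and leibniz: "x \<in> gcar A p \<Longrightarrow> y \<in> gcar A q \<Longrightarrow>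
      dif A (mul A x y) = mul A (dif A x) y + scl A (ksign p) (mul A x (dif A y))"

lemma is_dga_imp_dga: "is_dga A \<Longrightarrow> dga A"
  by unfold_locales (simp_all add: is_dga_def)

context dga
begin

lemma module: "module (scl A)"
  and subspace: "module.subspace (scl A) (gcar A p)"
  using graded by (simp_all add: graded_space_def)

lemma zero_in [simp, intro]: "0 \<in> gcar A p"
  by (rule module.subspace_0[OF module subspace])

lemma add_in [intro]: "x \<in> gcar A p \<Longrightarrow> y \<in> gcar A p \<Longrightarrow> x + y \<in> gcar A p"
  by (rule module.subspace_add[OF module subspace])

lemma uminus_in [intro]: "x \<in> gcar A p \<Longrightarrow> - x \<in> gcar A p"
  by (rule module.subspace_neg[OF module subspace])

lemma diff_in [intro]: "x \<in> gcar A p \<Longrightarrow> y \<in> gcar A p \<Longrightarrow> x - y \<in> gcar A p"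
  by (rule module.subspace_diff[OF module subspace])

lemma scale_in [intro]: "x \<in> gcar A p \<Longrightarrow> scl A c x \<in> gcar A p"
  by (rule module.subspace_scale[OF module subspace])

lemma sum_in [intro]: "(\<And>i. i \<in> I \<Longrightarrow> h i \<in> gcar A p) \<Longrightarrow> sum h I \<in> gcar A p"
  by (rule module.subspace_sum[OF module subspace])

lemma mul_in' [intro]: "x \<in> gcar A p \<Longrightarrow> y \<in> gcar A q \<Longrightarrow> r = p + q \<Longrightarrow> mul A x y \<in> gcar A r"
  using mul_in by blast

lemma dif_in' [intro]: "x \<in> gcar A p \<Longrightarrow> q = p + 1 \<Longrightarrow> dif A x \<in> gcar A q"
  using dif_in by blast

lemma scale_one [simp]: "scl A 1 x = x"
  by (rule module.scale_one[OF module])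

lemma scale_minus_one [simp]: "scl A (-1) x = - x"
  using module.scale_minus_left[OF module, of 1] by simp

lemma scale_zero_right [simp]: "scl A c 0 = 0"
  by (rule module.scale_zero_right[OF module])

lemma scale_scale [simp]: "scl A c (scl A c' x) = scl A (c * c') x"
  by (rule module.scale_scale[OF module])

lemma dif_0 [simp]: "dif A 0 = 0"
  using dif_add[of 0 0 0] by simp

lemma dif_uminus: "x \<in> gcar A p \<Longrightarrow> dif A (- x) = - dif A x"
  using dif_scale[of x p "-1"] by simp

lemma dif_sum: "(\<And>i. i \<in> I \<Longrightarrow> h i \<in> gcar A p) \<Longrightarrow> dif A (sum h I) = (\<Sum>i\<in>I. dif A (h i))"
proof (induction I rule: infinite_finite_induct)
  case (insert i I)
  then show ?case by (simp add: dif_add[of _ p] sum_in)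
qed simp_all

lemma mul_0_left [simp]: "y \<in> gcar A q \<Longrightarrow> mul A 0 y = 0"
  using mul_add_left[of 0 0 0 y q] by simp

lemma mul_0_right [simp]: "y \<in> gcar A q \<Longrightarrow> mul A y 0 = 0"
  using mul_add_right[of 0 0 0 y q] by simp

lemma mul_uminus_right: "x \<in> gcar A p \<Longrightarrow> y \<in> gcar A q \<Longrightarrow> mul A y (- x) = - mul A y x"
  using mul_scale_right[of y q x p "-1"] by simp

lemma mul_sum_right:
  "y \<in> gcar A q \<Longrightarrow> (\<And>i. i \<in> I \<Longrightarrow> h i \<in> gcar A p) \<Longrightarrow> mul A y (sum h I) = (\<Sum>i\<in>I. mul A y (h i))"
proof (induction I rule: infinite_finite_induct)
  case (insert i I)
  then show ?case by (simp add: mul_add_right[of _ p] sum_in)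
qed simp_all

lemma dif_one [simp]: "dif A (one A) = 0"
proof -
  have "dif A (one A) = dif A (mul A (one A) (one A))"
    by (simp add: mul_one_left[of _ 0])
  also have "\<dots> = dif A (one A) + dif A (one A)"
    using leibniz[of "one A" 0 "one A" 0] dif_in[of "one A" 0]
    by (simp add: mul_one_left[of _ 1] mul_one_right[of _ 1])
  finally show ?thesis by simp
qed

lemma leibniz_0: "x \<in> gcar A 0 \<Longrightarrow> y \<in> gcar A q \<Longrightarrow>
    dif A (mul A x y) = mul A (dif A x) y + mul A x (dif A y)"
  using leibniz[of x 0 y q] by simp

lemma leibniz_1: "x \<in> gcar A 1 \<Longrightarrow> y \<in> gcar A q \<Longrightarrow>
    dif A (mul A x y) = mul A (dif A x) y - mul A x (dif A y)"
  using leibniz[of x 1 y q] by simp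

lemma exact_in_dif: "u \<in> gcar A (p - 1) \<Longrightarrow> exact_in A p (dif A u)"
  unfolding exact_in_def by blast

lemma exact_in_add: "exact_in A p x \<Longrightarrow> exact_in A p y \<Longrightarrow> exact_in A p (x + y)"
  unfolding exact_in_def by (metis add_in dif_add)

lemma exact_in_uminus: "exact_in A p x \<Longrightarrow> exact_in A p (- x)"
  unfolding exact_in_def by (metis uminus_in dif_uminus)

lemma exact_in_diff: "exact_in A p x \<Longrightarrow> exact_in A p y \<Longrightarrow> exact_in A p (x - y)"
  using exact_in_add[of p x "- y"] exact_in_uminus[of p y] by simp

lemma mul_cocycle_exact:
  assumes a: "a \<in> gcar A q" "dif A a = 0" and y: "exact_in A p y"
  shows "exact_in A (q + p) (mul A a y)"
proof -
  obtain w where w: "w \<in> gcar A (p - 1)" "y = dif A w"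
    using y unfolding exact_in_def by blast
  have "mul A a y = scl A (ksign q) (dif A (mul A a w))"
    using leibniz[OF a(1) w(1)] a w by (simp add: mul_in)
  also have "\<dots> = dif A (scl A (ksign q) (mul A a w))"
    using dif_scale[OF mul_in[OF a(1) w(1)]] by simp
  finally show ?thesis
    using a(1) w(1) by (metis exact_in_dif mul_in scale_in add_diff_eq)
qed

lemma mul_exact_cocycle:
  assumes x: "exact_in A q x" and y: "y \<in> gcar A p" "dif A y = 0"
  shows "exact_in A (q + p) (mul A x y)"
proof -
  obtain w where w: "w \<in> gcar A (q - 1)" "x = dif A w"
    using x unfolding exact_in_def by blast
  have "mul A x y = dif A (mul A w y)"
    using leibniz[OF w(1) y(1)] w y by simp
  then show ?thesis
    using w(1) y(1) by (metis exact_in_dif mul_in diff_add_eq)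
qed

lemma mul_cohomologous_exact:
  assumes \<eta>: "\<eta> \<in> gcar A 1" "dif A \<eta> = 0" and b: "b \<in> gcar A 0"
    and x: "x \<in> gcar A p" "dif A x = 0" and v: "v \<in> gcar A (p - 1)"
    and \<eta>x_exact: "exact_in A (1 + p) (mul A \<eta> x)"
  shows "exact_in A (1 + p) (mul A (\<eta> + dif A b) (x + dif A v))"
proof -
  have dv: "dif A v \<in> gcar A p" "dif A (dif A v) = 0"
    using dif_in[OF v] dif_dif[OF v] by simp_all
  have \<beta>: "dif A b \<in> gcar A 1"
    using dif_in[OF b] by simp
  have "mul A (\<eta> + dif A b) (x + dif A v) = (mul A \<eta> x + mul A \<eta> (dif A v)) + mul A (dif A b) (x + dif A v)"
    using mul_add_left[OF \<eta>(1) \<beta> add_in[OF x(1) dv(1)]] mul_add_right[OF x(1) dv(1) \<eta>(1)] by simp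
  moreover have "exact_in A (1 + p) (mul A \<eta> (dif A v))"
    using mul_cocycle_exact[OF \<eta> exact_in_dif[OF v]] .
  moreover have "exact_in A (1 + p) (mul A (dif A b) (x + dif A v))"
    using mul_exact_cocycle[OF exact_in_dif add_in[OF x(1) dv(1)]] b x dv by (simp add: dif_add)
  ultimately show ?thesis
    using \<eta>x_exact by (simp add: exact_in_add)
qed

end

locale cdga = dga A for A :: "('k::field_char_0, 'a::ab_group_add) dga_rec" +
  assumes mul_commute_graded: "x \<in> gcar A p \<Longrightarrow> y \<in> gcar A q \<Longrightarrow>
    mul A x y = scl A (ksign (p * q)) (mul A y x)"

lemma is_cdga_imp_cdga: "is_cdga A \<Longrightarrow> cdga A"
  unfolding is_cdga_def cdga_def cdga_axioms_def by (blast intro: is_dga_imp_dga)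

context cdga
begin

lemma mul_commute_0: "x \<in> gcar A 0 \<Longrightarrow> y \<in> gcar A q \<Longrightarrow> mul A x y = mul A y x"
  using mul_commute_graded[of x 0 y q] by simp

lemma mul_left_commute_0:
  "x \<in> gcar A 0 \<Longrightarrow> y \<in> gcar A q \<Longrightarrow> z \<in> gcar A r \<Longrightarrow> mul A x (mul A y z) = mul A y (mul A x z)"
  using mul_assoc[of x 0 y q z r] mul_assoc[of y q x 0 z r] mul_commute_0[of x y q] by simp

lemma mul_self_1:
  assumes x: "x \<in> gcar A 1"
  shows "mul A x x = 0"
proof -
  have "mul A x x + mul A x x = 0"
    using mul_commute_graded[OF x x] by (simp add: eq_neg_iff_add_eq_0[symmetric])
  then have "scl A 2 (mul A x x) = 0"
    using module.scale_left_distrib[OF module, of 1 1] by simp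
  then have "scl A (inverse 2) (scl A 2 (mul A x x)) = 0"
    by simp
  then show ?thesis
    by simp
qed

end

section \<open>Cocycles of deformed differentials\<close>

lemma Dt_eq_0_iff:
  "Dt d act xi s = (\<lambda>_. 0) \<longleftrightarrow> d (s 0) = 0 \<and> (\<forall>n. d (s (Suc n)) + act xi (s n) = 0)"
proof -
  have "Dt d act xi s = (\<lambda>_. 0) \<longleftrightarrow> Dt d act xi s 0 = 0 \<and> (\<forall>n. Dt d act xi s (Suc n) = 0)"
    by (metis not0_implies_Suc)
  then show ?thesis
    by (simp add: Dt_def)
qed

lemma Dt_shift:
  assumes "Dt d act xi s = (\<lambda>_. 0)"
  shows "Dt d act xi (\<lambda>n. s (Suc n)) = - pconst (act xi (s 0))"
proof
  fix n
  show "Dt d act xi (\<lambda>n. s (Suc n)) n = (- pconst (act xi (s 0))) n"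
    using assms unfolding Dt_eq_0_iff
    by (cases n) (auto simp: Dt_def pconst_def eq_neg_iff_add_eq_0)
qed

context cdga
begin

text \<open>Divided powers b^k/k!, the coefficients of exp(tb).\<close>

fun dpow :: "'a \<Rightarrow> nat \<Rightarrow> 'a" where
  "dpow b 0 = one A"
| "dpow b (Suc k) = scl A (inverse (of_nat (Suc k))) (mul A b (dpow b k))"

declare dpow.simps(2) [simp del]

lemma dpow_in [intro]: "b \<in> gcar A 0 \<Longrightarrow> dpow b k \<in> gcar A 0"
  by (induction k) (auto simp: dpow.simps(2) intro!: scale_in mul_in'[where p = 0 and q = 0])

lemma mul_dpow: "mul A b (dpow b k) = scl A (of_nat (Suc k)) (dpow b (Suc k))"
proof -
  have "(of_nat (Suc k) :: 'k) * inverse (of_nat (Suc k)) = 1"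
    by (simp del: of_nat_Suc)
  then show ?thesis
    by (simp only: dpow.simps scale_scale scale_one)
qed

lemma dif_dpow_Suc:
  assumes b: "b \<in> gcar A 0"
  shows "dif A (dpow b (Suc k)) = mul A (dif A b) (dpow b k)"
proof (induction k)
  case 0
  show ?case
    using b dif_in[OF b] by (simp add: dpow.simps(2) mul_one_right[of _ 0] mul_one_right[of _ 1])
next
  case (Suc k)
  let ?\<beta> = "dif A b" and ?E = "dpow b (Suc k)" and ?c = "of_nat (Suc (Suc k)) :: 'k"
  have \<beta>: "?\<beta> \<in> gcar A 1"
    using dif_in[OF b] by simp
  have "dif A (mul A b ?E) = mul A ?\<beta> ?E + mul A b (mul A ?\<beta> (dpow b k))"
    using leibniz_0[OF b dpow_in[OF b]] Suc by (simp only:)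
  also have "mul A b (mul A ?\<beta> (dpow b k)) = scl A (of_nat (Suc k)) (mul A ?\<beta> ?E)"
    using mul_left_commute_0[OF b \<beta> dpow_in[OF b]] mul_scale_right[OF \<beta> dpow_in[OF b]]
    by (simp only: mul_dpow)
  also have "mul A ?\<beta> ?E + \<dots> = scl A ?c (mul A ?\<beta> ?E)"
    using module.scale_left_distrib[OF module, of 1 "of_nat (Suc k)"] by simp
  finally have "dif A (dpow b (Suc (Suc k))) = scl A (inverse ?c * ?c) (mul A ?\<beta> ?E)"
    unfolding dpow.simps(2)[of b "Suc k"] using dif_scale[OF mul_in'[OF b dpow_in[OF b]]]
    by (simp only: scale_scale)
  also have "inverse ?c * ?c = 1"
    by (simp del: of_nat_Suc)
  finally show ?case
    by simp
qed

lemma sum_dif_dpow_mul: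
  assumes b: "b \<in> gcar A 0" and F: "\<And>n. F n \<in> gcar A p"
  shows "(\<Sum>k\<le>Suc n. mul A (dif A (dpow b k)) (F (Suc n - k)))
    = (\<Sum>k\<le>n. mul A (dpow b k) (mul A (dif A b) (F (n - k))))"
proof -
  have \<beta>: "dif A b \<in> gcar A 1"
    using dif_in[OF b] by simp
  have "mul A (dif A (dpow b (Suc k))) (F (n - k)) = mul A (dpow b k) (mul A (dif A b) (F (n - k)))" for k
    using dif_dpow_Suc[OF b] mul_assoc[OF \<beta> dpow_in[OF b] F] mul_left_commute_0[OF dpow_in[OF b] \<beta> F]
    by simp
  then show ?thesis
    unfolding sum.atMost_Suc_shift using mul_0_left[OF F] by simp
qed

lemma sum_dpow_mul_dif:
  assumes \<eta>: "\<eta> \<in> gcar A 1" and b: "b \<in> gcar A 0" and F: "\<And>n. F n \<in> gcar A p"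
    and dF0: "dif A (F 0) = 0" and dFS: "\<And>n. dif A (F (Suc n)) = - mul A (\<eta> + dif A b) (F n)"
  shows "(\<Sum>k\<le>Suc n. mul A (dpow b k) (dif A (F (Suc n - k))))
    = - (\<Sum>k\<le>n. mul A (dpow b k) (mul A \<eta> (F (n - k))))
      - (\<Sum>k\<le>n. mul A (dpow b k) (mul A (dif A b) (F (n - k))))"
proof -
  have \<beta>: "dif A b \<in> gcar A 1"
    using dif_in[OF b] by simp
  have "mul A (dpow b k) (dif A (F (Suc n - k)))
      = - mul A (dpow b k) (mul A \<eta> (F (n - k))) - mul A (dpow b k) (mul A (dif A b) (F (n - k)))"
    if "k \<le> n" for k
  proof -
    have "dif A (F (Suc n - k)) = - (mul A \<eta> (F (n - k)) + mul A (dif A b) (F (n - k)))"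
      using dFS[of "n - k"] mul_add_left[OF \<eta> \<beta> F] that by (simp add: Suc_diff_le)
    moreover have "mul A \<eta> (F (n - k)) \<in> gcar A (1 + p)" "mul A (dif A b) (F (n - k)) \<in> gcar A (1 + p)"
      using \<eta> \<beta> F by blast+
    ultimately show ?thesis
      using dpow_in[OF b] by (simp only: minus_add_distrib diff_conv_add_uminus uminus_in
          mul_add_right[of _ "1 + p" _ "dpow b k" 0] mul_uminus_right[of _ "1 + p" "dpow b k" 0])
  qed
  then show ?thesis
    using dF0 mul_0_right[OF dpow_in[OF b]] by (simp add: sum_subtractf sum_negf)
qed

text \<open>Multiplication by exp(tb) conjugates D_t for \<eta> + db into D_t for \<eta>.\<close>

lemma Dt_cocycle_gauge:
  assumes \<eta>: "\<eta> \<in> gcar A 1" and b: "b \<in> gcar A 0"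
    and F: "F \<in> pser (gcar A) p" and F_cocycle: "Dt (dif A) (mul A) (\<eta> + dif A b) F = (\<lambda>_. 0)"
  shows "\<exists>e \<in> pser (gcar A) p. e 0 = F 0 \<and> Dt (dif A) (mul A) \<eta> e = (\<lambda>_. 0)"
proof -
  have Fn: "F n \<in> gcar A p" for n
    using F unfolding pser_def by blast
  have EF: "mul A (dpow b k) (F m) \<in> gcar A p" for k m
    using dpow_in[OF b] Fn by (rule mul_in') simp
  have dF0: "dif A (F 0) = 0" and dFS: "dif A (F (Suc n)) = - mul A (\<eta> + dif A b) (F n)" for n
    using F_cocycle unfolding Dt_eq_0_iff by (auto simp: eq_neg_iff_add_eq_0)
  define e where "e n = (\<Sum>k\<le>n. mul A (dpow b k) (F (n - k)))" for n
  have e: "e \<in> pser (gcar A) p"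
    unfolding pser_def e_def using EF by (simp add: sum_in)
  have e0: "e 0 = F 0"
    unfolding e_def using mul_one_left[OF Fn] by simp
  have "dif A (e (Suc n)) + mul A \<eta> (e n) = 0" for n
  proof -
    have "dif A (e (Suc n)) = (\<Sum>k\<le>Suc n. mul A (dif A (dpow b k)) (F (Suc n - k)))
        + (\<Sum>k\<le>Suc n. mul A (dpow b k) (dif A (F (Suc n - k))))"
      unfolding e_def dif_sum[OF EF] leibniz_0[OF dpow_in[OF b] Fn] by (rule sum.distrib)
    also have "\<dots> = - (\<Sum>k\<le>n. mul A (dpow b k) (mul A \<eta> (F (n - k))))"
      unfolding sum_dif_dpow_mul[where F = F, OF b Fn] sum_dpow_mul_dif[where F = F, OF \<eta> b Fn dF0 dFS]
      by simp
    also have "\<dots> = - mul A \<eta> (e n)"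
      unfolding e_def using mul_sum_right[OF \<eta>, where h = "\<lambda>k. mul A (dpow b k) (F (n - k))" and p = p] EF
        mul_left_commute_0[OF dpow_in[OF b] \<eta> Fn] by simp
    finally show ?thesis
      by simp
  qed
  with e e0 dF0 show ?thesis
    unfolding Dt_eq_0_iff by auto
qed

end

lemma
  assumes "quasi_iso M B f"
  shows quasi_iso_in: "x \<in> gcar M p \<Longrightarrow> f x \<in> gcar B p"
    and quasi_iso_add: "x \<in> gcar M p \<Longrightarrow> y \<in> gcar M p \<Longrightarrow> f (x + y) = f x + f y"
    and quasi_iso_mul: "x \<in> gcar M p \<Longrightarrow> y \<in> gcar M q \<Longrightarrow> f (mul M x y) = mul B (f x) (f y)"
    and quasi_iso_dif: "x \<in> gcar M p \<Longrightarrow> f (dif M x) = dif B (f x)"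
    and quasi_iso_reflects_exact:
      "z \<in> gcar M p \<Longrightarrow> dif M z = 0 \<Longrightarrow> exact_in B p (f z) \<Longrightarrow> exact_in M p z"
    and quasi_iso_surj:
      "w \<in> gcar B p \<Longrightarrow> dif B w = 0 \<Longrightarrow> \<exists>z \<in> gcar M p. dif M z = 0 \<and> exact_in B p (f z - w)"
  using assms unfolding quasi_iso_def by blast+

lemma
  assumes "quasi_iso_to_coh M B g"
  shows quasi_iso_to_coh_cocycle: "x \<in> gcar M p \<Longrightarrow> g x \<in> gcar B p \<and> dif B (g x) = 0"
    and quasi_iso_to_coh_add:
      "x \<in> gcar M p \<Longrightarrow> y \<in> gcar M p \<Longrightarrow> exact_in B p (g (x + y) - (g x + g y))"
    and quasi_iso_to_coh_scale: "x \<in> gcar M p \<Longrightarrow> exact_in B p (g (scl M c x) - scl B c (g x))"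
    and quasi_iso_to_coh_mul:
      "x \<in> gcar M p \<Longrightarrow> y \<in> gcar M q \<Longrightarrow> exact_in B (p + q) (g (mul M x y) - mul B (g x) (g y))"
    and quasi_iso_to_coh_reflects_exact:
      "z \<in> gcar M p \<Longrightarrow> dif M z = 0 \<Longrightarrow> exact_in B p (g z) \<Longrightarrow> exact_in M p z"
    and quasi_iso_to_coh_surj:
      "w \<in> gcar B p \<Longrightarrow> dif B w = 0 \<Longrightarrow> \<exists>z \<in> gcar M p. dif M z = 0 \<and> exact_in B p (g z - w)"
  using assms unfolding quasi_iso_to_coh_def by blast+

lemma exact_mul_correction:
  fixes M :: "('k::field_char_0, 'm::ab_group_add) dga_rec" and B :: "('k, 'b::ab_group_add) dga_rec"
  assumes "cdga M" "dga B" and g: "quasi_iso_to_coh M B g"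
    and e: "e \<in> gcar M 1" "dif M e = 0" and a: "a \<in> gcar M p"
    and ea_exact: "exact_in M (1 + p) (mul M e a)"
  shows "\<exists>a' \<in> gcar M p. dif M a' + mul M e a = 0 \<and> exact_in M (1 + p) (mul M e a')"
proof -
  interpret M: cdga M by fact
  interpret B: dga B by fact
  obtain u where u: "u \<in> gcar M p" "dif M u = mul M e a"
    using ea_exact unfolding exact_in_def by auto
  obtain c where c: "c \<in> gcar M p" "dif M c = 0" "exact_in B p (g c - g (- u))"
    using quasi_iso_to_coh_surj[OF g] quasi_iso_to_coh_cocycle[OF g M.uminus_in[OF u(1)]] by blast
  \<comment> \<open>-u solves the equation; correcting it by a representative of [g(-u)] makes g a' exact,
    and then g(e a') is exact too, because g is multiplicative up to boundaries.\<close>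
  define a' where "a' = - u + - c"
  have a': "a' \<in> gcar M p"
    unfolding a'_def using u c by blast
  have da': "dif M a' = - mul M e a"
    using M.dif_add[OF M.uminus_in[OF u(1)] M.uminus_in[OF c(1)]] M.dif_uminus[OF u(1)]
      M.dif_uminus[OF c(1)] u c unfolding a'_def by simp
  have "exact_in B p (g (- u + - c) - (g (- u) + g (- c)))"
    using quasi_iso_to_coh_add[OF g] u c by blast
  moreover have "exact_in B p (g (- c) - scl B (-1) (g c))"
    using quasi_iso_to_coh_scale[OF g c(1), of "-1"] by simp
  ultimately have "exact_in B p ((g (- u + - c) - (g (- u) + g (- c))) + (g (- c) - scl B (-1) (g c))
      - (g c - g (- u)))"
    using c(3) by (rule B.exact_in_diff[OF B.exact_in_add])
  then have ga'_exact: "exact_in B p (g a')"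
    unfolding a'_def by (simp add: algebra_simps)
  have ea': "mul M e a' \<in> gcar M (1 + p)"
    using e a' by blast
  have "dif M (mul M e a') = mul M (mul M e e) a"
    using M.leibniz_1[OF e(1) a'] e a da' M.mul_uminus_right[of _ "1 + p" e 1] M.mul_assoc[OF e(1) e(1) a]
      M.mul_0_left[OF a'] by (simp add: M.mul_in)
  then have dea': "dif M (mul M e a') = 0"
    using M.mul_self_1[OF e(1)] a by simp
  have ge: "g e \<in> gcar B 1" "dif B (g e) = 0"
    using quasi_iso_to_coh_cocycle[OF g e(1)] by auto
  have "exact_in B (1 + p) ((g (mul M e a') - mul B (g e) (g a')) + mul B (g e) (g a'))"
    using quasi_iso_to_coh_mul[OF g e(1) a'] B.mul_cocycle_exact[OF ge ga'_exact] by (rule B.exact_in_add)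
  then have "exact_in M (1 + p) (mul M e a')"
    using quasi_iso_to_coh_reflects_exact[OF g ea' dea'] by simp
  with a' da' show ?thesis
    by (intro bexI[of _ a']) simp_all
qed

lemma Dt_cocycle_of_exact_mul:
  fixes M :: "('k::field_char_0, 'm::ab_group_add) dga_rec" and B :: "('k, 'b::ab_group_add) dga_rec"
  assumes "cdga M" "dga B" and g: "quasi_iso_to_coh M B g"
    and e: "e \<in> gcar M 1" "dif M e = 0" and z: "z \<in> gcar M p" "dif M z = 0"
    and ez_exact: "exact_in M (1 + p) (mul M e z)"
  shows "\<exists>\<sigma> \<in> pser (gcar M) p. \<sigma> 0 = z \<and> Dt (dif M) (mul M) e \<sigma> = (\<lambda>_. 0)"
proof -
  define good where "good a \<longleftrightarrow> a \<in> gcar M p \<and> exact_in M (1 + p) (mul M e a)" for a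
  define next_term where "next_term a = (SOME a'. good a' \<and> dif M a' + mul M e a = 0)" for a
  have next_term: "good (next_term a) \<and> dif M (next_term a) + mul M e a = 0" if "good a" for a
    unfolding next_term_def
    by (rule someI_ex) (use exact_mul_correction[OF assms(1-3) e] that in \<open>auto simp: good_def\<close>)
  define \<sigma> where "\<sigma> n = (next_term ^^ n) z" for n
  have good_\<sigma>: "good (\<sigma> n)" for n
    by (induction n) (use z ez_exact next_term in \<open>auto simp: \<sigma>_def good_def\<close>)
  have "\<sigma> \<in> pser (gcar M) p"
    using good_\<sigma> unfolding pser_def good_def by blast
  moreover have "dif M (\<sigma> (Suc n)) + mul M e (\<sigma> n) = 0" for n
    using next_term[OF good_\<sigma>[of n]] by (simp add: \<sigma>_def)
  moreover have "\<sigma> 0 = z"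
    by (simp add: \<sigma>_def)
  ultimately show ?thesis
    using z unfolding Dt_eq_0_iff by blast
qed

lemma quasi_iso_Dt_cocycle:
  assumes "dga M" and f: "quasi_iso M B f"
    and e: "e \<in> gcar M 1" and \<sigma>: "\<sigma> \<in> pser (gcar M) p" and "Dt (dif M) (mul M) e \<sigma> = (\<lambda>_. 0)"
  shows "Dt (dif B) (mul B) (f e) (f \<circ> \<sigma>) = (\<lambda>_. 0)"
proof -
  interpret M: dga M by fact
  have \<sigma>n: "\<sigma> n \<in> gcar M p" for n
    using \<sigma> unfolding pser_def by blast
  have f0: "f 0 = 0"
    using quasi_iso_add[OF f M.zero_in M.zero_in] by simp
  have "f (dif M (\<sigma> (Suc n))) + f (mul M e (\<sigma> n)) = f (dif M (\<sigma> (Suc n)) + mul M e (\<sigma> n))" for n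
  proof (rule quasi_iso_add[OF f, symmetric])
    show "dif M (\<sigma> (Suc n)) \<in> gcar M (1 + p)"
      using M.dif_in[OF \<sigma>n] by (simp add: add.commute)
    show "mul M e (\<sigma> n) \<in> gcar M (1 + p)"
      using e \<sigma>n by blast
  qed
  with assms(5) f0 show ?thesis
    unfolding Dt_eq_0_iff using quasi_iso_dif[OF f \<sigma>n, symmetric] quasi_iso_mul[OF f e \<sigma>n] by simp
qed

lemma quasi_iso_cocycle_preimage:
  assumes "quasi_iso M B f" "w \<in> gcar B p" "dif B w = 0"
  obtains z v where "z \<in> gcar M p" "dif M z = 0" "v \<in> gcar B (p - 1)" "f z = w + dif B v"
proof -
  obtain z where "z \<in> gcar M p" "dif M z = 0" "exact_in B p (f z - w)"
    using quasi_iso_surj[OF assms] by blast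
  moreover from this(3) obtain v where "v \<in> gcar B (p - 1)" "f z - w = dif B v"
    unfolding exact_in_def by auto
  ultimately show thesis
    by (intro that[of z v]) (auto simp: algebra_simps)
qed

lemma (in cdga) formal_lift_cocycle:
  assumes formal: "formal_dga TYPE('m::ab_group_add) A"
    and \<eta>: "\<eta> \<in> gcar A 1" "dif A \<eta> = 0" and x: "x \<in> gcar A p" "dif A x = 0"
    and \<eta>x_exact: "exact_in A (1 + p) (mul A \<eta> x)"
  shows "\<exists>s \<in> pser (gcar A) p. Dt (dif A) (mul A) \<eta> s = (\<lambda>_. 0) \<and> (\<exists>v \<in> gcar A (p - 1). s 0 = x + dif A v)"
proof -
  obtain M :: "('k, 'm) dga_rec" and f g
    where M: "minimal_sullivan M" and f: "quasi_iso M A f" and g: "quasi_iso_to_coh M A g"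
    using formal unfolding formal_dga_def by blast
  have "cdga M"
    using M unfolding minimal_sullivan_def by (blast intro: is_cdga_imp_cdga)
  then interpret M: cdga M .
  obtain e b where e: "e \<in> gcar M 1" "dif M e = 0" and "b \<in> gcar A (1 - 1)" and fe: "f e = \<eta> + dif A b"
    using quasi_iso_cocycle_preimage[OF f \<eta>] .
  then have b: "b \<in> gcar A 0"
    by simp
  obtain z v where z: "z \<in> gcar M p" "dif M z = 0" and v: "v \<in> gcar A (p - 1)" and fz: "f z = x + dif A v"
    using quasi_iso_cocycle_preimage[OF f x] .
  have "exact_in A (1 + p) (f (mul M e z))"
    using mul_cohomologous_exact[OF \<eta> b x v \<eta>x_exact] quasi_iso_mul[OF f e(1) z(1)] by (simp add: fe fz)
  then have "exact_in M (1 + p) (mul M e z)"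
    using quasi_iso_reflects_exact[OF f] e z by (simp add: M.leibniz_1 M.mul_in)
  then obtain \<sigma> where \<sigma>: "\<sigma> \<in> pser (gcar M) p" "\<sigma> 0 = z" "Dt (dif M) (mul M) e \<sigma> = (\<lambda>_. 0)"
    using Dt_cocycle_of_exact_mul[OF M.cdga_axioms dga_axioms g e z] by blast
  have "f \<circ> \<sigma> \<in> pser (gcar A) p"
    using \<sigma>(1) quasi_iso_in[OF f] unfolding pser_def by auto
  moreover have "Dt (dif A) (mul A) (\<eta> + dif A b) (f \<circ> \<sigma>) = (\<lambda>_. 0)"
    using quasi_iso_Dt_cocycle[OF M.dga_axioms f e(1) \<sigma>(1,3)] by (simp add: fe)
  ultimately have "\<exists>s \<in> pser (gcar A) p. s 0 = (f \<circ> \<sigma>) 0 \<and> Dt (dif A) (mul A) \<eta> s = (\<lambda>_. 0)"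
    by (rule Dt_cocycle_gauge[OF \<eta>(1) b])
  then obtain s where s: "s \<in> pser (gcar A) p" "s 0 = f (\<sigma> 0)" "Dt (dif A) (mul A) \<eta> s = (\<lambda>_. 0)"
    by auto
  moreover have "s 0 = x + dif A v"
    using s(2) \<sigma>(2) fz by simp
  ultimately show ?thesis
    using v by fast
qed

section \<open>Split DG-modules\<close>

lemma dga_overD:
  assumes "dga_over A B act"
  shows "a \<in> gcar A p \<Longrightarrow> x \<in> gcar B q \<Longrightarrow> act a x \<in> gcar B (p + q)"
    and "a \<in> gcar A p \<Longrightarrow> a' \<in> gcar A p \<Longrightarrow> x \<in> gcar B q \<Longrightarrow>
      act (a + a') x = act a x + act a' x"
    and "a \<in> gcar A p \<Longrightarrow> x \<in> gcar B q \<Longrightarrow> x' \<in> gcar B q \<Longrightarrow>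
      act a (x + x') = act a x + act a x'"
    and "a \<in> gcar A p \<Longrightarrow> a' \<in> gcar A p' \<Longrightarrow> x \<in> gcar B q \<Longrightarrow>
      act (mul A a a') x = act a (act a' x)"
    and "a \<in> gcar A p \<Longrightarrow> x \<in> gcar B q \<Longrightarrow>
      dif B (act a x) = act (dif A a) x + scl B (ksign p) (act a (dif B x))"
    and "a \<in> gcar A p \<Longrightarrow> x \<in> gcar B q \<Longrightarrow> y \<in> gcar B r \<Longrightarrow>
      act a (mul B x y) = mul B (act a x) y"
proof -
  have module: "dg_module_over A (scl B) (dif B) (gcar B) act"
    and mul_right: "\<forall>p q r. \<forall>a \<in> gcar A p. \<forall>x \<in> gcar B q. \<forall>y \<in> gcar B r.
      act a (mul B x y) = mul B (act a x) y"
    using assms unfolding dga_over_def by auto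
  have in_B: "\<forall>p q. \<forall>a \<in> gcar A p. \<forall>x \<in> gcar B q. act a x \<in> gcar B (p + q)"
    and bilinear: "\<forall>p q c. \<forall>a \<in> gcar A p. \<forall>a' \<in> gcar A p. \<forall>x \<in> gcar B q. \<forall>x' \<in> gcar B q.
      act (a + a') x = act a x + act a' x \<and> act a (x + x') = act a x + act a x' \<and>
      act (scl A c a) x = scl B c (act a x) \<and> act a (scl B c x) = scl B c (act a x)"
    and assoc: "\<forall>p p' q. \<forall>a \<in> gcar A p. \<forall>a' \<in> gcar A p'. \<forall>x \<in> gcar B q.
      act (mul A a a') x = act a (act a' x)"
    and leibniz: "\<forall>p q. \<forall>a \<in> gcar A p. \<forall>x \<in> gcar B q.
      dif B (act a x) = act (dif A a) x + scl B (ksign p) (act a (dif B x))"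
    using module unfolding dg_module_over_def by simp_all
  show "a \<in> gcar A p \<Longrightarrow> x \<in> gcar B q \<Longrightarrow> act a x \<in> gcar B (p + q)"
    using in_B by blast
  show "a \<in> gcar A p \<Longrightarrow> a' \<in> gcar A p \<Longrightarrow> x \<in> gcar B q \<Longrightarrow> act (a + a') x = act a x + act a' x"
    using bilinear by blast
  show "a \<in> gcar A p \<Longrightarrow> x \<in> gcar B q \<Longrightarrow> x' \<in> gcar B q \<Longrightarrow> act a (x + x') = act a x + act a x'"
    using bilinear by blast
  show "a \<in> gcar A p \<Longrightarrow> a' \<in> gcar A p' \<Longrightarrow> x \<in> gcar B q \<Longrightarrow> act (mul A a a') x = act a (act a' x)"
    using assoc by blast
  show "a \<in> gcar A p \<Longrightarrow> x \<in> gcar B q \<Longrightarrow>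
      dif B (act a x) = act (dif A a) x + scl B (ksign p) (act a (dif B x))"
    using leibniz by blast
  show "a \<in> gcar A p \<Longrightarrow> x \<in> gcar B q \<Longrightarrow> y \<in> gcar B r \<Longrightarrow> act a (mul B x y) = mul B (act a x) y"
    using mul_right by blast
qed

lemma dg_submoduleD:
  assumes "dg_submodule A B act X" and "module (scl B)"
  shows "x \<in> X p \<Longrightarrow> x \<in> gcar B p"
    and "0 \<in> X p"
    and "x \<in> X p \<Longrightarrow> y \<in> X p \<Longrightarrow> x + y \<in> X p"
    and "x \<in> X p \<Longrightarrow> - x \<in> X p"
    and "x \<in> X p \<Longrightarrow> y \<in> X p \<Longrightarrow> x - y \<in> X p"
    and "x \<in> X p \<Longrightarrow> dif B x \<in> X (p + 1)"
    and "a \<in> gcar A q \<Longrightarrow> x \<in> X p \<Longrightarrow> act a x \<in> X (q + p)"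
proof -
  have X: "X p \<subseteq> gcar B p" "module.subspace (scl B) (X p)" for p
    using assms(1) unfolding dg_submodule_def by blast+
  show "x \<in> X p \<Longrightarrow> x \<in> gcar B p"
    using X(1) by blast
  show "0 \<in> X p"
    using module.subspace_0[OF assms(2) X(2)] .
  show "x \<in> X p \<Longrightarrow> y \<in> X p \<Longrightarrow> x + y \<in> X p"
    using module.subspace_add[OF assms(2) X(2)] .
  show "x \<in> X p \<Longrightarrow> - x \<in> X p"
    using module.subspace_neg[OF assms(2) X(2)] .
  show "x \<in> X p \<Longrightarrow> y \<in> X p \<Longrightarrow> x - y \<in> X p"
    using module.subspace_diff[OF assms(2) X(2)] .
  show "x \<in> X p \<Longrightarrow> dif B x \<in> X (p + 1)"
    using assms(1) unfolding dg_submodule_def by blast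
  show "a \<in> gcar A q \<Longrightarrow> x \<in> X p \<Longrightarrow> act a x \<in> X (q + p)"
    using assms(1) unfolding dg_submodule_def by blast
qed

locale algebra_over = A: dga A + B: dga B
  for A :: "('k::field, 'a::ab_group_add) dga_rec" and B :: "('k, 'b::ab_group_add) dga_rec" +
  fixes act :: "'a \<Rightarrow> 'b \<Rightarrow> 'b"
  assumes dga_over: "dga_over A B act"
begin

lemmas act_in [intro] = dga_overD(1)[OF dga_over]
  and act_add_left = dga_overD(2)[OF dga_over]
  and act_add_right = dga_overD(3)[OF dga_over]
  and act_mul = dga_overD(4)[OF dga_over]
  and act_dif = dga_overD(5)[OF dga_over]
  and act_mul_right = dga_overD(6)[OF dga_over]

lemma act_0_left [simp]: "x \<in> gcar B q \<Longrightarrow> act 0 x = 0"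
  using act_add_left[of 0 0 0 x q] by simp

lemma act_0_right [simp]: "a \<in> gcar A p \<Longrightarrow> act a 0 = 0"
  using act_add_right[of a p 0 0 0] by simp

lemma act_uminus_right: "a \<in> gcar A p \<Longrightarrow> x \<in> gcar B q \<Longrightarrow> act a (- x) = - act a x"
  using act_add_right[of a p x q "- x"] B.uminus_in[of x q] by (simp add: eq_neg_iff_add_eq_0 add.commute)

end

locale split_submodule = algebra_over +
  fixes N K :: "int \<Rightarrow> 'b::ab_group_add set"
  assumes N_submodule: "dg_submodule A B act N"
    and K_submodule: "dg_submodule A B act K"
    and N_plus_K: "gcar B p = {x + y | x y. x \<in> N p \<and> y \<in> K p}"
    and N_inter_K: "N p \<inter> K p = {0}"
begin

lemmas N_in_B = dg_submoduleD(1)[OF N_submodule B.module]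
  and zero_in_N [simp, intro] = dg_submoduleD(2)[OF N_submodule B.module]
  and add_in_N [intro] = dg_submoduleD(3)[OF N_submodule B.module]
  and uminus_in_N [intro] = dg_submoduleD(4)[OF N_submodule B.module]
  and diff_in_N [intro] = dg_submoduleD(5)[OF N_submodule B.module]
  and dif_in_N [intro] = dg_submoduleD(6)[OF N_submodule B.module]
  and act_in_N [intro] = dg_submoduleD(7)[OF N_submodule B.module]
  and K_in_B = dg_submoduleD(1)[OF K_submodule B.module]
  and zero_in_K = dg_submoduleD(2)[OF K_submodule B.module]
  and add_in_K = dg_submoduleD(3)[OF K_submodule B.module]
  and diff_in_K = dg_submoduleD(5)[OF K_submodule B.module]
  and dif_in_K = dg_submoduleD(6)[OF K_submodule B.module]
  and act_in_K = dg_submoduleD(7)[OF K_submodule B.module]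

lemma pser_N_subset: "pser N p \<subseteq> pser (gcar B) p"
  using N_in_B unfolding pser_def by blast

definition proj :: "int \<Rightarrow> 'b \<Rightarrow> 'b" where
  "proj p w = (THE n. n \<in> N p \<and> w - n \<in> K p)"

lemma proj_eqI:
  assumes "n \<in> N p" "w - n \<in> K p"
  shows "proj p w = n"
  unfolding proj_def
proof (rule the_equality)
  fix n' assume n': "n' \<in> N p \<and> w - n' \<in> K p"
  have "n' - n \<in> N p"
    using assms n' by blast
  moreover have "n' - n \<in> K p"
    using diff_in_K[of "w - n" p "w - n'"] assms n' by simp
  ultimately have "n' - n \<in> N p \<inter> K p"
    by (rule IntI)
  then show "n' = n"
    using N_inter_K[of p] by simp
qed (use assms in blast)

lemma proj_in_N:
  assumes "w \<in> gcar B p"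
  shows "proj p w \<in> N p" and "w - proj p w \<in> K p"
proof -
  obtain n k where "w = n + k" "n \<in> N p" "k \<in> K p"
    using assms N_plus_K by blast
  then have "proj p w = n"
    by (intro proj_eqI) auto
  with \<open>w = n + k\<close> \<open>n \<in> N p\<close> \<open>k \<in> K p\<close> show "proj p w \<in> N p" "w - proj p w \<in> K p"
    by auto
qed

lemma proj_N [simp]: "n \<in> N p \<Longrightarrow> proj p n = n"
  using zero_in_K by (intro proj_eqI) auto

lemma proj_add:
  assumes "w \<in> gcar B p" "w' \<in> gcar B p"
  shows "proj p (w + w') = proj p w + proj p w'"
proof (rule proj_eqI)
  have "w + w' - (proj p w + proj p w') = (w - proj p w) + (w' - proj p w')"
    by simp
  then show "w + w' - (proj p w + proj p w') \<in> K p"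
    using proj_in_N assms add_in_K by metis
qed (use proj_in_N assms in blast)

lemma proj_dif:
  assumes w: "w \<in> gcar B p"
  shows "proj (p + 1) (dif B w) = dif B (proj p w)"
proof (rule proj_eqI)
  have "dif B w = dif B (proj p w) + dif B (w - proj p w)"
    using B.dif_add[OF N_in_B K_in_B, OF proj_in_N[OF w]] by simp
  then show "dif B w - dif B (proj p w) \<in> K (p + 1)"
    using dif_in_K[OF proj_in_N(2)[OF w]] by (simp add: algebra_simps)
qed (use proj_in_N[OF w] in blast)

lemma proj_act:
  assumes a: "a \<in> gcar A q" and w: "w \<in> gcar B p"
  shows "proj (q + p) (act a w) = act a (proj p w)"
proof (rule proj_eqI)
  have "act a w = act a (proj p w) + act a (w - proj p w)"
    using act_add_right[OF a N_in_B K_in_B, OF proj_in_N[OF w]] by simp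
  then show "act a w - act a (proj p w) \<in> K (q + p)"
    using act_in_K[OF a proj_in_N(2)[OF w]] by (simp add: algebra_simps)
qed (use proj_in_N[OF w] a in blast)

end

section \<open>Degeneration\<close>

locale deformation = split_submodule A B act N K + A: cdga A + B: cdga B
  for A :: "('k::field_char_0, 'a::ab_group_add) dga_rec" and B :: "('k, 'b::ab_group_add) dga_rec"
    and act N K +
  fixes xi :: 'a
  assumes xi_in: "xi \<in> gcar A 1"
    and dif_xi: "dif A xi = 0"
begin

abbreviation D :: "(nat \<Rightarrow> 'b) \<Rightarrow> nat \<Rightarrow> 'b" where
  "D \<equiv> Dt (dif B) act xi"

definition eta :: 'b where
  "eta = act xi (one B)"

lemma eta_in: "eta \<in> gcar B 1"
  using act_in[OF xi_in B.one_in] by (simp add: eta_def)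

lemma act_xi_eq_mul_eta: "x \<in> gcar B q \<Longrightarrow> act xi x = mul B eta x"
  using act_mul_right[OF xi_in B.one_in, of x q] B.mul_one_left[of x q] by (simp add: eta_def)

lemma dif_eta: "dif B eta = 0"
  using act_dif[OF xi_in B.one_in] dif_xi act_0_left[OF B.one_in] act_0_right[OF xi_in]
  by (simp add: eta_def)

lemma dif_act_xi: "x \<in> gcar B q \<Longrightarrow> dif B (act xi x) = - act xi (dif B x)"
  using act_dif[OF xi_in, of x q] dif_xi by simp

lemma act_xi_act_xi: "x \<in> gcar B q \<Longrightarrow> act xi (act xi x) = 0"
  using act_mul[OF xi_in xi_in, of x q] A.mul_self_1[OF xi_in] by simp

lemma Dt_eq_Dt_mul_eta:
  assumes "s \<in> pser (gcar B) p"
  shows "D s = Dt (dif B) (mul B) eta s"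
proof -
  have "act xi (s n) = mul B eta (s n)" for n
    using assms act_xi_eq_mul_eta unfolding pser_def by blast
  then show ?thesis
    by (simp add: Dt_def cong: if_cong)
qed

lemma Dt_add:
  assumes "s \<in> pser (gcar B) p" "s' \<in> pser (gcar B) p"
  shows "D (s + s') = D s + D s'"
proof
  fix n
  have "s n \<in> gcar B p" "s' n \<in> gcar B p" for n
    using assms unfolding pser_def by blast+
  then show "D (s + s') n = (D s + D s') n"
    by (cases n) (simp_all add: Dt_def B.dif_add[of _ p] act_add_right[OF xi_in, of _ p])
qed

lemma Dt_uminus:
  assumes "s \<in> pser (gcar B) p"
  shows "D (- s) = - D s"
proof
  fix n
  have "s n \<in> gcar B p" for n
    using assms unfolding pser_def by blast
  then show "D (- s) n = (- D s) n"
    by (cases n) (simp_all add: Dt_def B.dif_uminus[of _ p] act_uminus_right[OF xi_in, of _ p])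
qed

lemma Dt_diff:
  assumes "s \<in> pser (gcar B) p" "s' \<in> pser (gcar B) p"
  shows "D (s - s') = D s - D s'"
proof -
  have "- s' \<in> pser (gcar B) p"
    using assms(2) unfolding pser_def by auto
  then show ?thesis
    using Dt_add[OF assms(1)] Dt_uminus[OF assms(2)] by (simp only: diff_conv_add_uminus)
qed

lemma proj_Dt_cocycle:
  assumes s: "s \<in> pser (gcar B) p" and "D s = (\<lambda>_. 0)"
  shows "(\<lambda>n. proj p (s n)) \<in> pser N p" and "D (\<lambda>n. proj p (s n)) = (\<lambda>_. 0)"
proof -
  have sn: "s n \<in> gcar B p" for n
    using s unfolding pser_def by blast
  show "(\<lambda>n. proj p (s n)) \<in> pser N p"
    using proj_in_N(1)[OF sn] unfolding pser_def by blast
  have "dif B (proj p (s (Suc n))) + act xi (proj p (s n))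
      = proj (p + 1) (dif B (s (Suc n)) + act xi (s n))" for n
  proof -
    have "dif B (s (Suc n)) \<in> gcar B (p + 1)" "act xi (s n) \<in> gcar B (p + 1)"
      using B.dif_in[OF sn] act_in[OF xi_in sn] by (simp_all add: add.commute)
    then show ?thesis
      using proj_add proj_dif[OF sn] proj_act[OF xi_in sn] by (simp add: add.commute)
  qed
  then show "D (\<lambda>n. proj p (s n)) = (\<lambda>_. 0)"
    using assms(2) proj_dif[OF sn, of 0] unfolding Dt_eq_0_iff by simp
qed

lemma lift_cocycle:
  assumes formal: "formal_dga TYPE('m::ab_group_add) B"
    and x: "x \<in> N p" "dif B x = 0" and u: "u \<in> N p" "act xi x = dif B u"
  shows "\<exists>s \<in> pser N p. D s = (\<lambda>_. 0) \<and> (\<exists>v \<in> N (p - 1). s 0 = x + dif B v)"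
proof -
  have xB: "x \<in> gcar B p"
    using N_in_B[OF x(1)] .
  have "exact_in B (1 + p) (mul B eta x)"
    using B.exact_in_dif[of u "1 + p"] N_in_B[OF u(1)] u(2) act_xi_eq_mul_eta[OF xB] by simp
  then obtain s v where s: "s \<in> pser (gcar B) p" "Dt (dif B) (mul B) eta s = (\<lambda>_. 0)"
    and v: "v \<in> gcar B (p - 1)" "s 0 = x + dif B v"
    using B.formal_lift_cocycle[OF formal eta_in dif_eta xB x(2)] by blast
  have "D s = (\<lambda>_. 0)"
    using s Dt_eq_Dt_mul_eta by simp
  then have "(\<lambda>n. proj p (s n)) \<in> pser N p" "D (\<lambda>n. proj p (s n)) = (\<lambda>_. 0)"
    using proj_Dt_cocycle[OF s(1)] by blast+
  moreover have "proj p (s 0) = x + dif B (proj (p - 1) v)"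
    using proj_add[OF xB B.dif_in'[OF v(1)]] proj_dif[OF v(1)] x(1) v(2) by simp
  ultimately show ?thesis
    using proj_in_N(1)[OF v(1)] by fast
qed

lemma pconst_act_xi_exact:
  assumes s: "s \<in> pser N p" "D s = (\<lambda>_. 0)"
    and v: "v \<in> N (p - 1)" "s 0 = x + dif B v"
  shows "pconst (act xi x) = D (pconst (act xi v) - (\<lambda>n. s (Suc n)))"
proof -
  have sn: "s n \<in> gcar B p" for n
    using s(1) N_in_B unfolding pser_def by blast
  have vB: "v \<in> gcar B (p - 1)" and dvB: "dif B v \<in> gcar B p"
    using N_in_B[OF v(1)] B.dif_in[of v "p - 1"] by simp_all
  have xB: "x \<in> gcar B p"
    using B.diff_in[OF sn[of 0] dvB] v(2) by simp
  have pconst_in: "pconst (act xi v) \<in> pser (gcar B) p" and shift_in: "(\<lambda>n. s (Suc n)) \<in> pser (gcar B) p"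
    using act_in[OF xi_in vB] sn unfolding pser_def pconst_def by auto
  have "D (pconst (act xi v)) = - pconst (act xi (dif B v))"
  proof
    fix n
    show "D (pconst (act xi v)) n = (- pconst (act xi (dif B v))) n"
      using dif_act_xi[OF vB] act_xi_act_xi[OF vB] act_0_right[OF xi_in]
      by (cases n) (auto simp: Dt_def pconst_def)
  qed
  moreover have "D (\<lambda>n. s (Suc n)) = - pconst (act xi (s 0))"
    by (rule Dt_shift[OF s(2)])
  ultimately have "D (pconst (act xi v) - (\<lambda>n. s (Suc n))) = pconst (act xi (s 0)) - pconst (act xi (dif B v))"
    using Dt_diff[OF pconst_in shift_in] by simp
  moreover have "act xi (s 0) = act xi x + act xi (dif B v)"
    using act_add_right[OF xi_in xB dvB] v(2) by simp
  ultimately show ?thesis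
    by (simp add: fun_eq_iff pconst_def)
qed

lemma tpow_Dt_exact:
  assumes formal: "formal_dga TYPE('m::ab_group_add) B"
    and r: "2 \<le> r" and x: "x \<in> N p" "dif B x = 0"
    and u: "u \<in> pser N p" "tpow (r - 1) y - pconst (act xi x) = D u"
  shows "\<exists>u' \<in> pser N p. tpow (r - 1) y = D u'"
proof -
  have u0: "u 0 \<in> N p"
    using u(1) unfolding pser_def by blast
  \<comment> \<open>r \<ge> 2 kills the constant term of t^(r-1) y\<close>
  have "- act xi x = dif B (u 0)"
    using fun_cong[OF u(2), of 0] r by (simp add: tpow_def pconst_def Dt_def)
  then have "act xi x = dif B (- u 0)"
    using B.dif_uminus[OF N_in_B[OF u0]] by (metis minus_minus)
  then obtain s v where s: "s \<in> pser N p" "D s = (\<lambda>_. 0)" and v: "v \<in> N (p - 1)" "s 0 = x + dif B v"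
    using lift_cocycle[OF formal x uminus_in_N[OF u0]] by blast
  define c where "c = pconst (act xi v) - (\<lambda>n. s (Suc n))"
  have c: "c \<in> pser N p"
    using s(1) act_in_N[OF xi_in v(1)] unfolding c_def pser_def pconst_def by auto
  have "tpow (r - 1) y = D u + pconst (act xi x)"
    using u(2) by (simp add: algebra_simps)
  also have "pconst (act xi x) = D c"
    unfolding c_def by (rule pconst_act_xi_exact[OF s v])
  also have "D u + D c = D (u + c)"
    using Dt_add pser_N_subset u(1) c by (metis subsetD)
  finally have "tpow (r - 1) y = D (u + c)" .
  moreover have "u + c \<in> pser N p"
    using u(1) c unfolding pser_def by auto
  ultimately show ?thesis
    by blast
qed

end

theorem proposition3p16:
  fixes A :: "('k::field_char_0, 'a::ab_group_add) dga_rec"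
    and B :: "('k, 'b::ab_group_add) dga_rec"
    and act :: "'a \<Rightarrow> 'b \<Rightarrow> 'b"
    and N K :: "int \<Rightarrow> 'b set"
    and xi :: 'a
  assumes "is_cdga A"
    and "dga_over A B act"
    and "is_cdga B"
    and "formal_dga TYPE('m::ab_group_add) B"
    and "dg_submodule A B act N"
    and "dg_submodule A B act K"
    and "\<forall>p. gcar B p = {x + y | x y. x \<in> N p \<and> y \<in> K p}"
    and "\<forall>p. N p \<inter> K p = {0}"
    and "xi \<in> gcar A 1"
    and "dif A xi = 0"
  shows "defo_ss_degenerates_at_2 (dif B) act N xi"
proof -
  have "cdga A" "cdga B"
    using assms(1,3) by (simp_all add: is_cdga_imp_cdga)
  then interpret deformation A B act N K xi
    using assms by (intro deformation.intro split_submodule.intro algebra_over.intro deformation_axioms.intro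
        split_submodule_axioms.intro algebra_over_axioms.intro) (auto simp: cdga_def)
  show ?thesis
    unfolding defo_ss_degenerates_at_2_def
  proof (intro allI impI ballI)
    fix r :: nat and p x y
    assume "2 \<le> r" "x \<in> N p" "dif B x = 0" "y \<in> pser N (p + 1)" "D y = (\<lambda>_. 0)"
      and "\<exists>u \<in> pser N p. tpow (r - 1) y - pconst (act xi x) = D u"
    \<comment> \<open>the witness w = y works: the hypothesis already forces t^(r-1)[y] = 0\<close>
    then have "\<exists>u \<in> pser N p. tpow (r - 1) y = D u"
      using tpow_Dt_exact[OF assms(4)] by blast
    moreover have "y 0 - y 0 = dif B 0"
      by simp
    ultimately show "\<exists>w \<in> pser N (p + 1). D w = (\<lambda>_. 0) \<and> (\<exists>u \<in> pser N p. tpow (r - 1) w = D u)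
        \<and> (\<exists>v \<in> N p. y 0 - w 0 = dif B v)"
      using \<open>y \<in> pser N (p + 1)\<close> \<open>D y = (\<lambda>_. 0)\<close> zero_in_N by fast
  qed
qed

end
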